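(* For $N=3$ there exists a Weyl channel $\Phi\in\mathcal{A}_3^Q$ (accessible by a Lindblad semigroup) which is not unistochastic, i.e. there is no $U\in U(9)$ with $\Phi(\rho)=\mathrm{Tr}_E\big[U(\rho\otimes\tfrac{\mathbb{I}_3}{3})U^\dagger\big]$ for all $\rho$.
   Context: $\omega=e^{2\pi i/3}$, $X|j\rangle=|j\oplus1\rangle$ (addition mod 3), $Z=\mathrm{diag}(1,\omega,\omega^2)$, Weyl unitaries $U_\mu=X^kZ^l$, $\mu=3k+l\in\{0,\dots,8\}$. Superoperators act on $|A\rangle\rangle=\sum A_{ij}|i\rangle|j\rangle$ ($\rho\mapsto K\rho K^\dagger$ corresponds to $K\otimes\overline K$). $\mathcal{L}_\mu=U_\mu\otimes\overline{U}_\mu-\mathbb{I}_9$, and $\mathcal{A}_3^Q$ is the set of $\exp(\sum_{\mu=1}^8t_\mu\mathcal{L}_\mu)$ with all $t_\mu\ge0$. In the unistochasticity condition $U$ acts on $\mathbb{C}^3\otimes\mathbb{C}^3_E$ and $\mathrm{Tr}_E$ is the partial trace over the second (environment) factor. *)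

theory Defs
  imports "HOL-Analysis.Analysis" "HOL-Library.Numeral_Type"
begin

text \<open>Qutrit matrices: complex^3^3 (index type 3 = integers mod 3).
Superoperators: complex^(3*3)^(3*3); the vectorization is |A>> = sum A_ij |i>|j>,
i.e. the pair index (i,j) carries the entry A_ij.\<close>

definition omega :: complex where "omega = cis (2 * pi / 3)"

definition shiftX :: "complex^3^3" where
  "shiftX = (\<chi> i j. if i = j + 1 then 1 else 0)"

definition clockZ :: "complex^3^3" where
  "clockZ = (\<chi> i j. if i = j then (\<Sum>k<3::nat. if i = of_nat k then omega ^ k else 0) else 0)"

fun mpow :: "('a::semiring_1)^'n^'n \<Rightarrow> nat \<Rightarrow> 'a^'n^'n" where
  "mpow A 0 = mat 1"
| "mpow A (Suc n) = A ** mpow A n"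

definition weylU :: "nat \<Rightarrow> complex^3^3" where
  "weylU mu = mpow shiftX (mu div 3) ** mpow clockZ (mu mod 3)"

definition mconj :: "complex^'m^'n \<Rightarrow> complex^'m^'n" where
  "mconj A = (\<chi> i j. cnj (A $ i $ j))"

definition adjoint_mat :: "complex^'m^'n \<Rightarrow> complex^'n^'m" where
  "adjoint_mat A = (\<chi> i j. cnj (A $ j $ i))"

definition kron :: "complex^'n^'m \<Rightarrow> complex^'q^'p \<Rightarrow> complex^('n \<times> 'q)^('m \<times> 'p)" where
  "kron K L = (\<chi> p q. K $ fst p $ fst q * L $ snd p $ snd q)"

definition mexp :: "complex^'n^'n \<Rightarrow> complex^'n^'n" where
  "mexp A = (\<chi> i j. \<Sum>k. (mpow A k) $ i $ j / of_nat (fact k))"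

definition lindL :: "nat \<Rightarrow> complex^(3 \<times> 3)^(3 \<times> 3)" where
  "lindL mu = kron (weylU mu) (mconj (weylU mu)) - mat 1"

definition A3Q :: "(complex^(3 \<times> 3)^(3 \<times> 3)) set" where
  "A3Q = {mexp (\<Sum>mu\<in>{1..8}. t mu *\<^sub>R lindL mu) | t :: nat \<Rightarrow> real. \<forall>mu\<in>{1..8}. t mu \<ge> 0}"

definition apply_super :: "complex^(3 \<times> 3)^(3 \<times> 3) \<Rightarrow> complex^3^3 \<Rightarrow> complex^3^3" where
  "apply_super S rho = (\<chi> i j. \<Sum>k\<in>UNIV. \<Sum>l\<in>UNIV. S $ (i, j) $ (k, l) * rho $ k $ l)"

definition unitary_mat :: "complex^'n^'n \<Rightarrow> bool" where
  "unitary_mat U \<longleftrightarrow> U ** adjoint_mat U = mat 1 \<and> adjoint_mat U ** U = mat 1"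

definition ptrace_E :: "complex^('n \<times> 'e::finite)^('n \<times> 'e) \<Rightarrow> complex^'n^'n" where
  "ptrace_E M = (\<chi> i j. \<Sum>a\<in>UNIV. M $ (i, a) $ (j, a))"

definition unistochastic :: "complex^(3 \<times> 3)^(3 \<times> 3) \<Rightarrow> bool" where
  "unistochastic Phi \<longleftrightarrow>
     (\<exists>U :: complex^(3 \<times> 3)^(3 \<times> 3). unitary_mat U \<and>
        (\<forall>rho :: complex^3^3.
           apply_super Phi rho =
           ptrace_E (U ** kron rho ((1/3) *\<^sub>R (mat 1 :: complex^3^3)) ** adjoint_mat U)))"

end

theory Submission
  imports Defs
begin

text \<open>The channel \<open>exp (t L\<^sub>1)\<close> multiplies the entry \<open>\<rho>\<^sub>i\<^sub>j\<close> by
\<open>f(i,j) = exp (t (\<omega>\<^bsup>i-j\<^esup> - 1))\<close>. If it had a unitary dilation \<open>U\<close>, evaluating it on the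
matrix units would show that \<open>U\<close> is block diagonal, \<open>U = V\<^sub>0 \<oplus> V\<^sub>1 \<oplus> V\<^sub>2\<close> with unitary
blocks and \<open>tr (V\<^sub>k V\<^sub>l\<^sup>H) = 3 f(k,l)\<close>. For unitaries \<open>A = V\<^sub>1 V\<^sub>0\<^sup>H\<close>, \<open>B = V\<^sub>2 V\<^sub>0\<^sup>H\<close> the
identity \<open>X + X\<^sup>H = - X\<^sup>H X\<close> for \<open>X = A - 1\<close> makes \<open>Im tr ((B - 1)(A - 1)\<^sup>H)\<close> cubic in the
Frobenius norms \<open>\<parallel>A - 1\<parallel>, \<parallel>B - 1\<parallel> = O(\<surd>t)\<close>, whereas the prescribed traces make it
\<open>9 Im c\<close> with \<open>c = exp (t (\<omega> - 1))\<close>, which is of order \<open>t\<close>. Hence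
\<open>9 (Im c)\<^sup>2 \<le> 24 (1 - Re c)\<^sup>3\<close>, false for small \<open>t > 0\<close>.\<close>

lemma adjoint_mat_adjoint_mat [simp]: "adjoint_mat (adjoint_mat M) = M"
  by (simp add: adjoint_mat_def vec_eq_iff)

lemma adjoint_mat_mult:
  "adjoint_mat ((M :: complex^'k^'n) ** (N :: complex^'m^'k)) = adjoint_mat N ** adjoint_mat M"
  by (simp add: adjoint_mat_def matrix_matrix_mult_def vec_eq_iff mult.commute)

lemma adjoint_mat_diff: "adjoint_mat (M - N) = adjoint_mat M - adjoint_mat N"
  by (simp add: adjoint_mat_def vec_eq_iff)

lemma adjoint_mat_zero [simp]: "adjoint_mat 0 = 0"
  by (simp add: adjoint_mat_def vec_eq_iff)

lemma adjoint_mat_mat [simp]: "adjoint_mat (mat 1 :: complex^'n^'n) = mat 1"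
  by (simp add: adjoint_mat_def mat_def vec_eq_iff)

lemma trace_adjoint_mat: "trace (adjoint_mat M) = cnj (trace M)"
  by (simp add: trace_def adjoint_mat_def)

lemma matrix_diff_ldistrib: "(A :: 'a::ring_1^'n^'m) ** (B - C) = A ** B - A ** C"
  by (simp add: matrix_matrix_mult_def vec_eq_iff algebra_simps sum_subtractf)

lemma matrix_diff_rdistrib: "((A :: 'a::ring_1^'n^'m) - B) ** C = A ** C - B ** C"
  by (simp add: matrix_matrix_mult_def vec_eq_iff algebra_simps sum_subtractf)

lemma unitary_mat_adjoint_mat: "unitary_mat U \<Longrightarrow> unitary_mat (adjoint_mat U)"
  by (simp add: unitary_mat_def)

lemma unitary_mat_mult:
  assumes "unitary_mat U" "unitary_mat V"
  shows "unitary_mat (U ** V)"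
proof -
  have "U ** V ** adjoint_mat (U ** V) = U ** (V ** adjoint_mat V) ** adjoint_mat U"
    and "adjoint_mat (U ** V) ** (U ** V) = adjoint_mat V ** (adjoint_mat U ** U) ** V"
    by (simp_all add: adjoint_mat_mult matrix_mul_assoc)
  with assms show ?thesis by (simp add: unitary_mat_def)
qed

lemma trace_mult_adjoint_mat:
  "trace ((M :: complex^'n^'m) ** adjoint_mat N) = (\<Sum>i\<in>UNIV. \<Sum>j\<in>UNIV. M$i$j * cnj (N$i$j))"
  by (simp add: trace_def matrix_matrix_mult_def adjoint_mat_def)

lemma norm_matrix_sq: "norm (M :: 'a::real_normed_vector^'n^'m)^2 = (\<Sum>i\<in>UNIV. \<Sum>j\<in>UNIV. norm (M$i$j)^2)"
  by (simp add: norm_vec_def L2_set_def sum_nonneg)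

lemma norm_sq_eq_trace:
  "complex_of_real (norm (M :: complex^'n^'m)^2) = trace (M ** adjoint_mat M)"
  by (simp only: norm_matrix_sq trace_mult_adjoint_mat of_real_sum complex_norm_square)

lemma norm_adjoint_mat: "norm (adjoint_mat M) = norm M"
proof -
  have "norm (adjoint_mat M)^2 = norm M^2"
    unfolding norm_matrix_sq adjoint_mat_def by (simp, rule sum.swap)
  then show ?thesis by (simp add: power2_eq_iff_nonneg)
qed

lemma norm_matrix_mult_entry_le:
  "norm (((M :: 'a::real_normed_div_algebra^'k^'n) ** N)$i$j) \<le> norm (M$i) * norm (column j N)"
proof -
  have "norm ((M ** N)$i$j) \<le> (\<Sum>k\<in>UNIV. \<bar>norm (M$i$k)\<bar> * \<bar>norm (N$k$j)\<bar>)"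
    unfolding matrix_matrix_mult_def vec_lambda_beta by (rule order.trans[OF norm_sum]) (simp add: norm_mult)
  also have "\<dots> \<le> norm (M$i) * norm (column j N)"
  proof -
    have "norm (column j N) = L2_set (\<lambda>k. norm (N$k$j)) UNIV"
      by (simp add: norm_vec_def column_def)
    then show ?thesis
      unfolding norm_vec_def[of "M$i"] by (simp only: L2_set_mult_ineq)
  qed
  finally show ?thesis .
qed

lemma sum_norm_column_sq: "(\<Sum>j\<in>UNIV. norm (column j (N :: 'a::real_normed_vector^'k^'n))^2) = norm N^2"
proof -
  have "(\<Sum>j\<in>UNIV. norm (column j N)^2) = (\<Sum>j\<in>UNIV. \<Sum>k\<in>UNIV. norm (N$k$j)^2)"
    by (simp add: norm_vec_def L2_set_def column_def sum_nonneg)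
  also have "\<dots> = (\<Sum>k\<in>UNIV. \<Sum>j\<in>UNIV. norm (N$k$j)^2)"
    by (rule sum.swap)
  finally show ?thesis
    by (simp only: norm_matrix_sq)
qed

lemma sum_norm_row_sq: "(\<Sum>i\<in>UNIV. norm ((M :: 'a::real_normed_vector^'k^'n)$i)^2) = norm M^2"
  by (simp add: norm_vec_def L2_set_def sum_nonneg)

lemma norm_matrix_mult_le:
  "norm ((M :: 'a::real_normed_div_algebra^'k^'n) ** N) \<le> norm M * norm N"
proof -
  have "norm (M ** N)^2 \<le> (\<Sum>i\<in>UNIV. \<Sum>j\<in>UNIV. norm (M$i)^2 * norm (column j N)^2)"
    unfolding norm_matrix_sq
    by (intro sum_mono) (simp add: power_mult_distrib[symmetric] power_mono norm_matrix_mult_entry_le)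
  also have "\<dots> = (\<Sum>i\<in>UNIV. norm (M$i)^2) * (\<Sum>j\<in>UNIV. norm (column j N)^2)"
    by (simp add: sum_product)
  also have "\<dots> = (norm M * norm N)^2"
    by (simp only: sum_norm_row_sq sum_norm_column_sq power_mult_distrib)
  finally show ?thesis by (rule power2_le_imp_le) simp
qed

lemma norm_trace_mult_le:
  "norm (trace ((M :: 'a::{real_normed_div_algebra,comm_ring_1}^'n^'m) ** N)) \<le> norm M * norm N"
proof -
  have "norm (trace (M ** N)) \<le> (\<Sum>i\<in>UNIV. \<bar>norm (M$i)\<bar> * \<bar>norm (column i N)\<bar>)"
    unfolding trace_def by (simp add: order.trans[OF norm_sum] sum_mono norm_matrix_mult_entry_le)
  also have "\<dots> \<le> norm M * L2_set (\<lambda>i. norm (column i N)) UNIV"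
    unfolding norm_vec_def[of M] by (rule L2_set_mult_ineq)
  also have "L2_set (\<lambda>i. norm (column i N)) UNIV = norm N"
    by (simp add: L2_set_def sum_norm_column_sq)
  finally show ?thesis .
qed

lemma matrix_mul_uminus_right: "(A :: 'a::ring_1^'n^'m) ** (- B) = - (A ** B)"
  by (simp add: matrix_matrix_mult_def vec_eq_iff sum_negf)

lemma trace_uminus: "trace (- (A :: 'a::comm_ring_1^'n^'n)) = - trace A"
  by (simp add: trace_def sum_negf)

lemma trace_scaleR: "trace (r *\<^sub>R (A :: 'a::real_algebra_1^'n^'n)) = r *\<^sub>R trace A"
  by (simp add: trace_def scaleR_sum_right)

lemma unitary_minus_id_adjoint_mult:
  assumes "unitary_mat A"
  shows "adjoint_mat (A - mat 1) ** (A - mat 1) = - ((A - mat 1) + adjoint_mat (A - mat 1))"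
proof -
  have "adjoint_mat (A - mat 1) ** (A - mat 1) = adjoint_mat A ** A + mat 1 - A - adjoint_mat A"
    by (simp only: adjoint_mat_diff adjoint_mat_mat matrix_diff_ldistrib matrix_diff_rdistrib
        matrix_mul_lid matrix_mul_rid diff_diff_eq2 diff_add_eq)
  then show ?thesis
    using assms by (simp add: unitary_mat_def adjoint_mat_diff algebra_simps)
qed

lemma norm_unitary_minus_id_sq:
  fixes A :: "complex^'n^'n"
  assumes "unitary_mat A"
  shows "norm (A - mat 1)^2 = 2 * CARD('n) - 2 * Re (trace A)"
proof -
  define X where "X = A - mat 1"
  have "complex_of_real (norm X^2) = trace (adjoint_mat X ** X)"
    by (simp only: norm_sq_eq_trace trace_mul_sym[of X])
  also have "\<dots> = - trace X - cnj (trace X)"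
    using unitary_minus_id_adjoint_mult[OF assms, folded X_def]
    by (simp add: trace_sub trace_uminus trace_adjoint_mat)
  finally have "norm X^2 = - 2 * Re (trace X)"
    by (simp add: complex_eq_iff)
  then show ?thesis
    by (simp add: X_def trace_sub trace_I)
qed

lemma unitary_trace_triple_bound:
  fixes A B :: "complex^'n^'n"
  assumes "unitary_mat A" "unitary_mat B"
  shows "2 * \<bar>Im (trace (B ** adjoint_mat A)) - Im (trace B) + Im (trace A)\<bar>
    \<le> norm (A - mat 1) * norm (B - mat 1) * (norm (A - mat 1) + norm (B - mat 1))"
proof -
  define X Y where "X = A - mat 1" and "Y = B - mat 1"
  have X: "adjoint_mat X ** X = - (X + adjoint_mat X)"
    and Y: "adjoint_mat Y ** Y = - (Y + adjoint_mat Y)"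
    unfolding X_def Y_def using assms by (simp_all only: unitary_minus_id_adjoint_mult)
  define z where "z = trace (Y ** adjoint_mat X)"
  have "z = trace (B ** adjoint_mat A) - trace B - cnj (trace A) + of_nat CARD('n)"
    unfolding z_def X_def Y_def
    by (simp only: adjoint_mat_diff adjoint_mat_mat matrix_diff_ldistrib matrix_diff_rdistrib
        matrix_mul_lid matrix_mul_rid trace_sub trace_adjoint_mat trace_I) simp
  then have Im_z: "Im z = Im (trace (B ** adjoint_mat A)) - Im (trace B) + Im (trace A)"
    by simp
  have cnj_z: "cnj z = trace (X ** adjoint_mat Y)"
    by (simp add: z_def adjoint_mat_mult flip: trace_adjoint_mat)
  \<comment> \<open>Unitarity rewrites \<open>X\<^sup>H\<close> as \<open>- X - X\<^sup>H X\<close>; the quadratic parts of \<open>z\<close> and \<open>cnj z\<close> then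
    cancel since \<open>tr (Y X) = tr (X Y)\<close>, leaving two cubic terms.\<close>
  have "trace (Y ** (adjoint_mat X ** X)) = - trace (Y ** X) - z"
    and "trace (X ** (adjoint_mat Y ** Y)) = - trace (X ** Y) - cnj z"
    unfolding X Y cnj_z
    by (simp_all only: matrix_mul_uminus_right matrix_add_ldistrib trace_uminus trace_add
        z_def[symmetric]) simp_all
  then have z_minus_cnj:
    "z - cnj z = trace (X ** (adjoint_mat Y ** Y)) - trace (Y ** (adjoint_mat X ** X))"
    by (simp add: trace_mul_sym[of X Y])
  have "2 * \<bar>Im z\<bar> = cmod (z - cnj z)"
    by (simp add: complex_diff_cnj norm_mult)
  also have "\<dots> \<le> norm X * norm (adjoint_mat Y ** Y) + norm Y * norm (adjoint_mat X ** X)"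
    unfolding z_minus_cnj
    by (rule order.trans[OF norm_triangle_ineq4 add_mono]) (rule norm_trace_mult_le)+
  also have "\<dots> \<le> norm X * (norm Y * norm Y) + norm Y * (norm X * norm X)"
    using norm_matrix_mult_le[of "adjoint_mat X" X] norm_matrix_mult_le[of "adjoint_mat Y" Y]
    by (intro add_mono mult_left_mono) (simp_all add: norm_adjoint_mat)
  also have "\<dots> = norm X * norm Y * (norm X + norm Y)"
    by (simp only: algebra_simps)
  finally show ?thesis
    unfolding Im_z X_def Y_def .
qed

lemma unitary_traces_cubic_bound:
  fixes V0 V1 V2 :: "complex^'n^'n"
  assumes "unitary_mat V0" "unitary_mat V1" "unitary_mat V2"
    and tr10: "trace (V1 ** adjoint_mat V0) = of_nat CARD('n) * c"
    and tr20: "trace (V2 ** adjoint_mat V0) = of_nat CARD('n) * cnj c"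
    and tr21: "trace (V2 ** adjoint_mat V1) = of_nat CARD('n) * c"
  shows "9 * Im c ^ 2 \<le> 8 * CARD('n) * (1 - Re c) ^ 3"
proof -
  define n :: real where "n = CARD('n)"
  define A B where "A = V1 ** adjoint_mat V0" and "B = V2 ** adjoint_mat V0"
  have unitary: "unitary_mat A" "unitary_mat B"
    using assms by (simp_all add: A_def B_def unitary_mat_mult unitary_mat_adjoint_mat)
  have "B ** adjoint_mat A = V2 ** (adjoint_mat V0 ** V0) ** adjoint_mat V1"
    by (simp add: A_def B_def adjoint_mat_mult matrix_mul_assoc)
  then have trBA: "trace (B ** adjoint_mat A) = of_nat CARD('n) * c"
    using \<open>unitary_mat V0\<close> tr21 by (simp add: unitary_mat_def)
  define m where "m = norm (A - mat 1)"
  have m_sq: "m^2 = 2 * n * (1 - Re c)"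
    using norm_unitary_minus_id_sq[OF unitary(1)] tr10 by (simp add: m_def n_def A_def algebra_simps)
  have "norm (B - mat 1)^2 = m^2"
    using norm_unitary_minus_id_sq[OF unitary(2)] tr20 m_sq by (simp add: n_def B_def algebra_simps)
  then have "norm (B - mat 1) = m"
    by (simp add: m_def power2_eq_iff_nonneg)
  then have "2 * \<bar>3 * n * Im c\<bar> \<le> 2 * m^3"
    using unitary_trace_triple_bound[OF unitary] trBA tr10 tr20
    by (simp add: A_def B_def m_def n_def power3_eq_cube algebra_simps)
  then have "\<bar>3 * n * Im c\<bar> \<le> \<bar>m^3\<bar>"
    by (simp add: m_def)
  then have "(3 * n * Im c)^2 \<le> (m^3)^2"
    by (simp only: abs_le_square_iff)
  also have "\<dots> = (m^2)^3"
    by (simp flip: power_mult add: mult.commute)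
  also have "\<dots> = 8 * n^3 * (1 - Re c)^3"
    unfolding m_sq by (simp add: power_mult_distrib)
  finally have "n^2 * (9 * Im c ^ 2) \<le> n^2 * (8 * n * (1 - Re c)^3)"
    by (simp add: power_mult_distrib power3_eq_cube power2_eq_square algebra_simps)
  moreover have "n > 0"
    by (simp add: n_def)
  ultimately show ?thesis
    by (simp add: n_def)
qed

definition mat_block :: "'i::finite \<Rightarrow> 'k::finite \<Rightarrow> 'a^('k \<times> 'c::finite)^('i \<times> 'r::finite) \<Rightarrow> 'a^'c^'r" where
  "mat_block i k M = (\<chi> a e. M $ (i, a) $ (k, e))"

definition block_diagonal :: "'a::zero^('k::finite \<times> 'c::finite)^('k \<times> 'r::finite) \<Rightarrow> bool" where
  "block_diagonal M \<longleftrightarrow> (\<forall>i k. i \<noteq> k \<longrightarrow> mat_block i k M = 0)"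

lemma mat_block_mult:
  fixes M :: "'a::semiring_1^('k::finite \<times> 'c::finite)^('i::finite \<times> 'r::finite)"
    and N :: "'a^('j::finite \<times> 'd::finite)^('k \<times> 'c)"
  shows "mat_block i j (M ** N) = (\<Sum>m\<in>UNIV. mat_block i m M ** mat_block m j N)"
  by (simp add: mat_block_def matrix_matrix_mult_def vec_eq_iff sum_component
      sum.cartesian_product UNIV_Times_UNIV[symmetric] del: UNIV_Times_UNIV)

lemma mat_block_adjoint_mat: "mat_block i k (adjoint_mat M) = adjoint_mat (mat_block k i M)"
  by (simp add: mat_block_def adjoint_mat_def)

lemma mat_block_mat [simp]: "mat_block k k (mat 1) = mat 1"
  by (simp add: mat_block_def mat_def vec_eq_iff)

lemma block_diagonal_adjoint_mat: "block_diagonal M \<Longrightarrow> block_diagonal (adjoint_mat M)"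
  by (simp add: block_diagonal_def mat_block_adjoint_mat)

lemma mat_block_mult_block_diagonal:
  fixes M :: "'a::semiring_1^('k::finite \<times> 'c::finite)^('k \<times> 'r::finite)"
  assumes "block_diagonal M"
  shows "mat_block k k (M ** N) = mat_block k k M ** mat_block k k N"
proof -
  have "mat_block k m M ** mat_block m k N = 0" if "m \<noteq> k" for m
    using assms that by (simp add: block_diagonal_def)
  then show ?thesis
    by (simp add: mat_block_mult sum.remove[of UNIV k])
qed

lemma unitary_mat_diagonal_block:
  assumes "unitary_mat U" "block_diagonal U"
  shows "unitary_mat (mat_block k k U)"
proof -
  have "mat_block k k U ** adjoint_mat (mat_block k k U) = mat_block k k (U ** adjoint_mat U)"
    and "adjoint_mat (mat_block k k U) ** mat_block k k U = mat_block k k (adjoint_mat U ** U)"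
    using assms(2) block_diagonal_adjoint_mat[OF assms(2)]
    by (simp_all add: mat_block_mult_block_diagonal mat_block_adjoint_mat)
  with assms(1) show ?thesis
    by (simp add: unitary_mat_def)
qed

lemma ptrace_E_eq_trace_block: "ptrace_E M $ i $ j = trace (mat_block i j M)"
  by (simp add: ptrace_E_def trace_def mat_block_def)

lemma ptrace_E_conj_kron_basis:
  fixes U :: "complex^('n::finite \<times> 'e::finite)^('n \<times> 'e)" and k l :: 'n
  defines "E \<equiv> \<chi> x y. if x = k \<and> y = l then 1 else 0"
  shows "ptrace_E (U ** kron E (r *\<^sub>R mat 1) ** adjoint_mat U) $ i $ j
    = of_real r * trace (mat_block i k U ** adjoint_mat (mat_block j l U))"
proof -
  define K :: "complex^('n \<times> 'e)^('n \<times> 'e)" where "K = kron E (r *\<^sub>R mat 1)"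
  have K: "mat_block m n K = (if m = k \<and> n = l then r *\<^sub>R mat 1 else 0)" for m n
    by (simp add: K_def mat_block_def kron_def E_def vec_eq_iff)
  have UK: "mat_block i n (U ** K) = (if n = l then r *\<^sub>R mat_block i k U else 0)" for n
    by (simp add: mat_block_mult K if_distrib matrix_scalar_ac cong: if_cong)
  have "mat_block i j (U ** K ** adjoint_mat U)
      = (\<Sum>n\<in>UNIV. mat_block i n (U ** K) ** mat_block n j (adjoint_mat U))"
    by (rule mat_block_mult)
  also have "\<dots> = r *\<^sub>R (mat_block i k U ** adjoint_mat (mat_block j l U))"
  proof -
    have "mat_block i n (U ** K) ** mat_block n j (adjoint_mat U)
        = (if n = l then r *\<^sub>R (mat_block i k U ** adjoint_mat (mat_block j l U)) else 0)" for n
      by (simp add: UK mat_block_adjoint_mat scalar_matrix_assoc)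
    then show ?thesis
      by simp
  qed
  finally show ?thesis
    by (simp add: K_def ptrace_E_eq_trace_block trace_scaleR) (simp add: scaleR_conv_of_real)
qed

definition diag_mat :: "('n \<Rightarrow> complex) \<Rightarrow> complex^'n^'n" where
  "diag_mat d = (\<chi> p q. if p = q then d p else 0)"

lemma apply_super_diag_mat: "apply_super (diag_mat f) \<rho> = (\<chi> i j. f (i, j) * \<rho> $ i $ j)"
proof -
  have "diag_mat f $ (i, j) $ (k, l) * \<rho> $ k $ l
      = (if k = i then if l = j then f (i, j) * \<rho> $ i $ j else 0 else 0)" for i j k l
    by (simp add: diag_mat_def)
  then show ?thesis
    by (simp add: apply_super_def vec_eq_iff sum.If_cases)
qed

lemma unistochastic_diag_mat_gram:
  assumes "unistochastic (diag_mat f)" and diag: "\<And>i. f (i, i) = 1"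
  obtains V :: "3 \<Rightarrow> complex^3^3"
  where "\<And>k. unitary_mat (V k)" and "\<And>k l. trace (V k ** adjoint_mat (V l)) = 3 * f (k, l)"
proof -
  obtain U :: "complex^(3 \<times> 3)^(3 \<times> 3)" where U: "unitary_mat U"
    and Phi: "\<And>\<rho>. apply_super (diag_mat f) \<rho> = ptrace_E (U ** kron \<rho> ((1/3) *\<^sub>R mat 1) ** adjoint_mat U)"
    using assms(1) unfolding unistochastic_def by blast
  have gram: "trace (mat_block i k U ** adjoint_mat (mat_block j l U))
      = 3 * (if i = k \<and> j = l then f (i, j) else 0)" for i j k l
    using arg_cong[OF Phi[of "\<chi> x y. if x = k \<and> y = l then 1 else 0"], of "\<lambda>M. M $ i $ j"]
    by (simp add: apply_super_diag_mat ptrace_E_conj_kron_basis) (auto split: if_splits simp: mult.commute)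
  have "block_diagonal U"
  proof -
    have "norm (mat_block i k U) = 0" if "i \<noteq> k" for i k
      using gram[of i k i k] that diag by (simp flip: norm_sq_eq_trace)
    then show ?thesis
      by (simp add: block_diagonal_def)
  qed
  then show ?thesis
    using gram U by (intro that[of "\<lambda>k. mat_block k k U"]) (simp_all add: unitary_mat_diagonal_block)
qed

lemma Re_omega: "Re omega = - 1 / 2"
  by (simp add: omega_def cos_120)

lemma Im_omega: "Im omega = sqrt 3 / 2"
  using sin_120' by (simp add: omega_def mult.commute)

lemma norm_omega: "cmod omega = 1"
  by (simp add: omega_def)

lemma omega_squared: "omega^2 = cnj omega"
  by (simp add: complex_eq_iff power2_eq_square Re_omega Im_omega)

lemma cnj_omega_squared: "cnj omega * cnj omega = omega"
  by (simp add: complex_eq_iff Re_omega Im_omega)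

lemma clockZ_diagonal_entries:
  "clockZ $ 0 $ 0 = 1" "clockZ $ 1 $ 1 = omega" "clockZ $ 2 $ 2 = cnj omega"
  by (simp_all add: clockZ_def lessThan_nat_numeral flip: omega_squared)

lemma norm_clockZ_diagonal: "cmod (clockZ $ i $ i) = 1"
  using exhaust_3[of i] by (auto simp: clockZ_def lessThan_nat_numeral norm_omega norm_power)

lemma clockZ_eq_diag_mat: "clockZ = diag_mat (\<lambda>i. clockZ $ i $ i)"
  by (simp add: clockZ_def diag_mat_def vec_eq_iff)

lemma mpow_diag_mat: "mpow (diag_mat d) n = diag_mat (\<lambda>p. d p ^ n)"
  by (induction n) (simp_all add: diag_mat_def mat_def matrix_matrix_mult_def vec_eq_iff
      if_distrib if_distribR sum.If_cases cong: if_cong)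

lemma mexp_diag_mat: "mexp (diag_mat d) = diag_mat (\<lambda>p. exp (d p))"
proof -
  have "(\<Sum>k. x ^ k / fact k) = exp x" for x :: complex
    using exp_converges[of x] by (simp add: sums_iff scaleR_conv_of_real divide_inverse mult.commute)
  then show ?thesis
    unfolding mexp_def mpow_diag_mat by (simp add: diag_mat_def vec_eq_iff if_distrib cong: if_cong)
qed

lemma lindL_1: "lindL 1 = diag_mat (\<lambda>(i, j). clockZ $ i $ i * cnj (clockZ $ j $ j) - 1)"
proof -
  have "weylU 1 = clockZ"
    by (simp add: weylU_def)
  then show ?thesis
    by (subst (asm) clockZ_eq_diag_mat)
      (auto simp: lindL_def kron_def mconj_def diag_mat_def mat_def vec_eq_iff)
qed

definition dephasing :: "real \<Rightarrow> complex^(3 \<times> 3)^(3 \<times> 3)" where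
  "dephasing t = mexp (t *\<^sub>R lindL 1)"

lemma dephasing_in_A3Q:
  assumes "0 \<le> t"
  shows "dephasing t \<in> A3Q"
proof -
  have "(\<Sum>mu\<in>{1..8}. (if mu = 1 then t else 0) *\<^sub>R lindL mu) = t *\<^sub>R lindL 1"
    by (simp add: if_distrib[of "\<lambda>s. s *\<^sub>R _"] cong: if_cong)
  then show ?thesis
    unfolding A3Q_def dephasing_def using assms
    by (intro CollectI exI[of _ "\<lambda>mu. if mu = 1 then t else 0"]) auto
qed

lemma dephasing_eq_diag_mat:
  "dephasing t = diag_mat (\<lambda>(i, j). exp (of_real t * (clockZ $ i $ i * cnj (clockZ $ j $ j) - 1)))"
proof -
  have "t *\<^sub>R lindL 1 = diag_mat (\<lambda>(i, j). of_real t * (clockZ $ i $ i * cnj (clockZ $ j $ j) - 1))"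
    unfolding lindL_1 by (simp add: diag_mat_def vec_eq_iff split_def) (simp add: scaleR_conv_of_real)
  then show ?thesis
    by (simp add: dephasing_def mexp_diag_mat split_def)
qed

lemma exp_omega_phase_bound:
  fixes t :: real
  assumes "0 < t" "t \<le> 1/100"
  defines "c \<equiv> exp (of_real t * (omega - 1))"
  shows "24 * (1 - Re c)^3 < 9 * Im c ^ 2"
proof -
  define z where "z = of_real t * (omega - 1)"
  have Re_z: "Re z = - 3/2 * t" and Im_z: "Im z = sqrt 3 / 2 * t"
    by (simp_all add: z_def Re_omega Im_omega)
  have "exp \<bar>Re z\<bar> \<le> 2"
    using assms(1,2) exp_half_le2 by (simp add: Re_z order.trans[of _ "exp (1/2)"])
  have "cmod (c - (1 + z)) \<le> exp \<bar>Re z\<bar> * cmod z ^ 2"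
    using Taylor_exp[of z 1] by (simp add: c_def z_def power2_eq_square)
  also have "\<dots> \<le> 2 * cmod z ^ 2"
    by (rule mult_right_mono[OF \<open>exp \<bar>Re z\<bar> \<le> 2\<close> zero_le_power2])
  also have "\<dots> = 6 * t^2"
    by (simp add: cmod_power2 Re_z Im_z power_mult_distrib power_divide)
  also have "\<dots> \<le> t / 16"
    using assms(1,2) by (simp add: power2_eq_square)
  finally have err: "cmod (c - (1 + z)) \<le> t / 16" .
  have "\<bar>1 - Re c\<bar> \<le> 2 * t"
    using abs_Re_le_cmod[of "c - (1 + z)"] err assms(1) by (simp add: Re_z)
  then have "\<bar>1 - Re c\<bar>^3 \<le> (2 * t)^3"
    by (rule power_mono) simp
  then have "(1 - Re c)^3 \<le> (2 * t)^3"
    by (metis abs_ge_self order.trans power_abs)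
  moreover have "3/4 * t \<le> Im c"
  proof -
    have "1.7 \<le> sqrt 3"
      by (rule real_le_rsqrt) (simp add: power2_eq_square)
    then have "17/10 * t \<le> sqrt 3 * t"
      using assms(1) by (intro mult_right_mono) simp_all
    then show ?thesis
      using abs_Im_le_cmod[of "c - (1 + z)"] err by (simp add: Im_z abs_le_iff)
  qed
  then have "(3/4 * t)^2 \<le> Im c ^ 2"
    using assms(1) by (intro power_mono) simp_all
  moreover have "64 * t * t^2 < 27/16 * t^2"
    using assms(1,2) by (intro mult_strict_right_mono) simp_all
  moreover have "t^3 = t * t^2" "(3/4 * t)^2 = 9/16 * t^2"
    by (simp_all add: power3_eq_cube power2_eq_square)
  ultimately show ?thesis
    by (simp add: power_mult_distrib)
qed

lemma dephasing_not_unistochastic: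
  assumes "0 < t" "t \<le> 1/100"
  shows "\<not> unistochastic (dephasing t)"
proof
  define f :: "3 \<times> 3 \<Rightarrow> complex"
    where "f = (\<lambda>(i, j). exp (of_real t * (clockZ $ i $ i * cnj (clockZ $ j $ j) - 1)))"
  define c where "c = exp (of_real t * (omega - 1))"
  assume "unistochastic (dephasing t)"
  then have "unistochastic (diag_mat f)"
    by (simp only: dephasing_eq_diag_mat f_def)
  moreover have "\<And>i. f (i, i) = 1"
    using norm_clockZ_diagonal by (simp add: f_def complex_norm_square[symmetric])
  ultimately obtain V :: "3 \<Rightarrow> complex^3^3"
    where "\<And>k. unitary_mat (V k)" and "\<And>k l. trace (V k ** adjoint_mat (V l)) = 3 * f (k, l)"
    using unistochastic_diag_mat_gram by blast
  moreover have "f (1, 0) = c" "f (2, 0) = cnj c" "f (2, 1) = c"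
    by (simp_all add: f_def c_def clockZ_diagonal_entries exp_cnj cnj_omega_squared)
  ultimately have "9 * Im c ^ 2 \<le> 8 * CARD(3) * (1 - Re c)^3"
    by (intro unitary_traces_cubic_bound[of "V 0" "V 1" "V 2"]) simp_all
  with exp_omega_phase_bound[OF assms] show False
    by (simp add: c_def)
qed

theorem proposition8:
  shows "\<exists>Phi \<in> A3Q. \<not> unistochastic Phi"
  using dephasing_in_A3Q[of "1/100"] dephasing_not_unistochastic[of "1/100"] by auto

end
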